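(* Let $\{\rho_n\}_{n\ge0},\{\beta_n\}_{n\ge0},\{\tau_n\}_{n\ge0}$ be complex sequences with $\rho_n\ne0$, $\tau_n\neq0$ for $n\ge0$, $\beta_0\neq0,\pm1$, $\beta_n\neq0$ for $n\ge1$. Let $\mathcal{P}_0(\lambda)=1$, $\mathcal{P}_1(\lambda)=\rho_0(\lambda-\beta_0)$ and $\mathcal{P}_{n+1}(\lambda)=\rho_n(\lambda-\beta_n)\mathcal{P}_n(\lambda)+\tau_n\lambda\,\mathcal{P}_{n-1}(\lambda)$ for $n\ge1$. Let $\{\alpha_n\}_{n\ge0}$ be nonzero real numbers and put $\mathcal{Q}_0(\lambda)=1$, $\mathcal{Q}_n(\lambda)=\mathcal{P}_n(\lambda)+\alpha_n\mathcal{P}_{n-1}(\lambda)$ for $n\ge1$. Define for $n\ge1$ $$p_n=\alpha_{n-1}\rho_{n-1}-\tau_{n-1},\quad q_n=\alpha_{n-1}(\alpha_n-\rho_{n-1}\beta_{n-1}),\quad r_n=\rho_np_n,$$ $$s_n=\alpha_n^{-1}p_nq_{n+1}+\alpha_{n-1}(\tau_n-\rho_{n-1}\beta_{n-1}\rho_n),\quad t_n=-\alpha_n^{-1}\alpha_{n-1}\rho_{n-1}\beta_{n-1}q_{n+1},$$ and assume $p_{n+1}\neq0$ and $q_n\neq0$ for all $n\ge1$. Suppose the sequence $\{\alpha_n\}$ satisfies $$\alpha_n=-(\rho_{n-1}-\alpha_{n-1}^{-1}\tau_{n-1})+\rho_{n-1}\beta_{n-1},\quad n\ge2,$$ where $\alpha_1\neq\rho_0\beta_0$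 is arbitrary. If $\alpha_0=\tau_0\rho_0^{-1}$, then $\{\mathcal{Q}_n(\lambda)\}_{n\ge1}$ satisfies the mixed recurrence relations $$\mathcal{Q}_2(\lambda)=\frac{s_1}{q_1}\left(\lambda+\frac{t_1}{s_1}\right)\mathcal{Q}_1(\lambda)-\frac{\tau_0q_2}{q_1}\lambda(\lambda-1)\mathcal{Q}_0(\lambda),$$ $$\mathcal{Q}_{n+1}(\lambda)=\rho_n\left(\lambda-\frac{t_n}{r_n}\right)\mathcal{Q}_n(\lambda)+\frac{\tau_{n-1}q_{n+1}}{q_n}\lambda\,\mathcal{Q}_{n-1}(\lambda),\quad n\ge2,$$ with $\mathcal{Q}_1(\lambda)=\rho_0(\lambda+\alpha_1\rho_0^{-1}-\beta_0)$ and $\mathcal{Q}_0(\lambda)=1$.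
   Context: This is the case $\gamma_n=0$ (equivalently, after a shift of variable, $\gamma_n$ constant) of $R_I$ type recurrence relations $\mathcal{P}_{n+1}=\rho_n(\lambda-\beta_n)\mathcal{P}_n+\tau_n(\lambda-\gamma_n)\mathcal{P}_{n-1}$. The paper makes the standing assumptions $p_{n+1}\neq0$, $q_n\neq0$, $n\ge1$, in this setting. *)

theory Defs
  imports Complex_Main
begin

fun RP :: "(nat \<Rightarrow> complex) \<Rightarrow> (nat \<Rightarrow> complex) \<Rightarrow> (nat \<Rightarrow> complex) \<Rightarrow> nat \<Rightarrow> complex \<Rightarrow> complex" where
  "RP \<rho> \<beta> \<tau> 0 x = 1"
| "RP \<rho> \<beta> \<tau> (Suc 0) x = \<rho> 0 * (x - \<beta> 0)"
| "RP \<rho> \<beta> \<tau> (Suc (Suc n)) x =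
     \<rho> (Suc n) * (x - \<beta> (Suc n)) * RP \<rho> \<beta> \<tau> (Suc n) x + \<tau> (Suc n) * x * RP \<rho> \<beta> \<tau> n x"

definition RQ :: "(nat \<Rightarrow> complex) \<Rightarrow> (nat \<Rightarrow> complex) \<Rightarrow> (nat \<Rightarrow> complex) \<Rightarrow> (nat \<Rightarrow> real) \<Rightarrow> nat \<Rightarrow> complex \<Rightarrow> complex" where
  "RQ \<rho> \<beta> \<tau> \<alpha> n x = (if n = 0 then 1
     else RP \<rho> \<beta> \<tau> n x + complex_of_real (\<alpha> n) * RP \<rho> \<beta> \<tau> (n - 1) x)"

definition cp :: "(nat \<Rightarrow> complex) \<Rightarrow> (nat \<Rightarrow> complex) \<Rightarrow> (nat \<Rightarrow> real) \<Rightarrow> nat \<Rightarrow> complex" where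
  "cp \<rho> \<tau> \<alpha> n = complex_of_real (\<alpha> (n - 1)) * \<rho> (n - 1) - \<tau> (n - 1)"

definition cq :: "(nat \<Rightarrow> complex) \<Rightarrow> (nat \<Rightarrow> complex) \<Rightarrow> (nat \<Rightarrow> real) \<Rightarrow> nat \<Rightarrow> complex" where
  "cq \<rho> \<beta> \<alpha> n = complex_of_real (\<alpha> (n - 1)) *
      (complex_of_real (\<alpha> n) - \<rho> (n - 1) * \<beta> (n - 1))"

definition cr :: "(nat \<Rightarrow> complex) \<Rightarrow> (nat \<Rightarrow> complex) \<Rightarrow> (nat \<Rightarrow> real) \<Rightarrow> nat \<Rightarrow> complex" where
  "cr \<rho> \<tau> \<alpha> n = \<rho> n * cp \<rho> \<tau> \<alpha> n"

definition cs :: "(nat \<Rightarrow> complex) \<Rightarrow> (nat \<Rightarrow> complex) \<Rightarrow> (nat \<Rightarrow> complex) \<Rightarrow> (nat \<Rightarrow> real) \<Rightarrow> nat \<Rightarrow> complex" where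
  "cs \<rho> \<beta> \<tau> \<alpha> n = inverse (complex_of_real (\<alpha> n)) * cp \<rho> \<tau> \<alpha> n * cq \<rho> \<beta> \<alpha> (n + 1)
     + complex_of_real (\<alpha> (n - 1)) * (\<tau> n - \<rho> (n - 1) * \<beta> (n - 1) * \<rho> n)"

definition ct :: "(nat \<Rightarrow> complex) \<Rightarrow> (nat \<Rightarrow> complex) \<Rightarrow> (nat \<Rightarrow> real) \<Rightarrow> nat \<Rightarrow> complex" where
  "ct \<rho> \<beta> \<alpha> n = - inverse (complex_of_real (\<alpha> n)) * complex_of_real (\<alpha> (n - 1))
     * \<rho> (n - 1) * \<beta> (n - 1) * cq \<rho> \<beta> \<alpha> (n + 1)"

end

theory Submission
  imports Defs
begin

text \<open>
  Put d_n = alpha_n - rho_(n-1) beta_(n-1), so that q_n = alpha_(n-1) d_n. The recurrence for alpha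
  says exactly tau_(n-1) = alpha_(n-1) (d_n + rho_(n-1)), whence p_n = -q_n. Multiplied by d_n,
  the claimed recurrence for Q_(n+1) becomes an identity in P_(n-2), ..., P_(n+1) which reduces to
  the recurrence for P_(n+1) once the term alpha_(n-1) x P_(n-2) is eliminated with the recurrence
  for P_n. For n = 1 the choice alpha_0 = tau_0 / rho_0 makes p_1 = 0, and the step is a plain
  polynomial identity of degree two in x.
\<close>

lemma tau_eq_of_alpha_rec:
  fixes a b r c t :: "'a :: field"
  assumes "a \<noteq> 0" and "b = - (r - inverse a * t) + r * c"
  shows "t = a * (b - r * c + r)"
  using assms by (simp add: field_simps)

lemma shifted_three_term_recurrence:
  fixes x a d e rp bp tp rn bn tn P0 P1 P2 P3 :: "'a :: field"
  assumes "a \<noteq> 0" "d \<noteq> 0" "rn \<noteq> 0"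
    and "P2 = rp * (x - bp) * P1 + tp * x * P0" "tp = a * (d + rp)"
    and "P3 = rn * (x - bn) * P2 + tn * x * P1" "tn = (d + rp * bp) * (e + rn)"
  shows "P3 + (e + rn * bn) * P2
    = rn * (x - rp * bp * e / (rn * d)) * (P2 + (d + rp * bp) * P1)
      + tp * ((d + rp * bp) * e) / (a * d) * x * (P1 + a * P0)"
proof -
  have "d * (P3 + (e + rn * bn) * P2)
    = d * (rn * (x - rp * bp * e / (rn * d)) * (P2 + (d + rp * bp) * P1)
      + tp * ((d + rp * bp) * e) / (a * d) * x * (P1 + a * P0))"
    using assms by (simp add: field_simps) algebra
  then show ?thesis using \<open>d \<noteq> 0\<close> by simp
qed

lemma RQ_Suc_mixed_recurrence:
  fixes \<rho> \<beta> \<tau> :: "nat \<Rightarrow> complex" and \<alpha> :: "nat \<Rightarrow> real"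
  assumes "n \<ge> 2" and "\<rho> n \<noteq> 0" and "\<alpha> n \<noteq> 0" and q_n: "cq \<rho> \<beta> \<alpha> n \<noteq> 0"
    and alpha_rec: "\<And>k. k \<in> {n, n + 1} \<Longrightarrow> complex_of_real (\<alpha> k) =
         - (\<rho> (k - 1) - inverse (complex_of_real (\<alpha> (k - 1))) * \<tau> (k - 1)) + \<rho> (k - 1) * \<beta> (k - 1)"
  shows "RQ \<rho> \<beta> \<tau> \<alpha> (n + 1) x =
        \<rho> n * (x - ct \<rho> \<beta> \<alpha> n / cr \<rho> \<tau> \<alpha> n) * RQ \<rho> \<beta> \<tau> \<alpha> n x
        + \<tau> (n - 1) * cq \<rho> \<beta> \<alpha> (n + 1) / cq \<rho> \<beta> \<alpha> n * x * RQ \<rho> \<beta> \<tau> \<alpha> (n - 1) x"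
proof -
  define a b c where "a = complex_of_real (\<alpha> (n - 1))" and "b = complex_of_real (\<alpha> n)"
    and "c = complex_of_real (\<alpha> (n + 1))"
  define d e where "d = b - \<rho> (n - 1) * \<beta> (n - 1)" and "e = c - \<rho> n * \<beta> n"
  have "b \<noteq> 0" using \<open>\<alpha> n \<noteq> 0\<close> by (simp add: b_def)
  have "a \<noteq> 0" "d \<noteq> 0" using q_n by (simp_all add: cq_def a_def b_def d_def)
  have tau_prev: "\<tau> (n - 1) = a * (d + \<rho> (n - 1))"
    using tau_eq_of_alpha_rec[OF \<open>a \<noteq> 0\<close> alpha_rec[of n, folded a_def b_def]] by (simp add: d_def)
  have "c = - (\<rho> n - inverse b * \<tau> n) + \<rho> n * \<beta> n"
    using alpha_rec[of "n + 1"] by (simp add: b_def c_def)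
  then have tau_n: "\<tau> n = (d + \<rho> (n - 1) * \<beta> (n - 1)) * (e + \<rho> n)"
    using tau_eq_of_alpha_rec[OF \<open>b \<noteq> 0\<close>] by (simp add: d_def e_def)
  have cq_Suc: "cq \<rho> \<beta> \<alpha> (n + 1) = b * e"
    by (simp add: cq_def b_def c_def e_def)
  then have "ct \<rho> \<beta> \<alpha> n = - a * \<rho> (n - 1) * \<beta> (n - 1) * e"
    using \<open>b \<noteq> 0\<close> by (simp add: ct_def a_def flip: b_def)
  moreover have "cr \<rho> \<tau> \<alpha> n = - \<rho> n * a * d"
    unfolding cr_def cp_def tau_prev a_def[symmetric] by (simp add: algebra_simps)
  ultimately have ct_div_cr: "ct \<rho> \<beta> \<alpha> n / cr \<rho> \<tau> \<alpha> n = \<rho> (n - 1) * \<beta> (n - 1) * e / (\<rho> n * d)"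
    using \<open>a \<noteq> 0\<close> by simp
  obtain m where n_Suc_Suc: "n = Suc (Suc m)"
    using \<open>n \<ge> 2\<close> by (metis add_2_eq_Suc le_Suc_ex)
  have P_n: "RP \<rho> \<beta> \<tau> n x = \<rho> (n - 1) * (x - \<beta> (n - 1)) * RP \<rho> \<beta> \<tau> (n - 1) x
      + \<tau> (n - 1) * x * RP \<rho> \<beta> \<tau> (n - 2) x"
    using n_Suc_Suc by simp
  have P_Suc: "RP \<rho> \<beta> \<tau> (n + 1) x = \<rho> n * (x - \<beta> n) * RP \<rho> \<beta> \<tau> n x
      + \<tau> n * x * RP \<rho> \<beta> \<tau> (n - 1) x"
    using n_Suc_Suc by simp
  have RQ_Suc: "RQ \<rho> \<beta> \<tau> \<alpha> (n + 1) x = RP \<rho> \<beta> \<tau> (n + 1) x + (e + \<rho> n * \<beta> n) * RP \<rho> \<beta> \<tau> n x"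
    by (simp add: RQ_def c_def e_def)
  have RQ_n: "RQ \<rho> \<beta> \<tau> \<alpha> n x = RP \<rho> \<beta> \<tau> n x + (d + \<rho> (n - 1) * \<beta> (n - 1)) * RP \<rho> \<beta> \<tau> (n - 1) x"
    using \<open>n \<ge> 2\<close> by (simp add: RQ_def b_def d_def)
  have RQ_pred: "RQ \<rho> \<beta> \<tau> \<alpha> (n - 1) x = RP \<rho> \<beta> \<tau> (n - 1) x + a * RP \<rho> \<beta> \<tau> (n - 2) x"
    using n_Suc_Suc by (simp add: RQ_def a_def)
  have coeff: "\<tau> (n - 1) * cq \<rho> \<beta> \<alpha> (n + 1) / cq \<rho> \<beta> \<alpha> n
      = \<tau> (n - 1) * ((d + \<rho> (n - 1) * \<beta> (n - 1)) * e) / (a * d)"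
    unfolding cq_Suc by (simp add: cq_def a_def b_def d_def)
  show ?thesis
    unfolding RQ_Suc RQ_n RQ_pred ct_div_cr coeff
    by (rule shifted_three_term_recurrence[OF \<open>a \<noteq> 0\<close> \<open>d \<noteq> 0\<close> \<open>\<rho> n \<noteq> 0\<close> P_n tau_prev P_Suc tau_n])
qed

lemma RQ_two_mixed_recurrence:
  fixes \<rho> \<beta> \<tau> :: "nat \<Rightarrow> complex" and \<alpha> :: "nat \<Rightarrow> real"
  assumes "\<rho> 0 \<noteq> 0" and "\<alpha> 1 \<noteq> 0"
    and q_1: "cq \<rho> \<beta> \<alpha> 1 \<noteq> 0" and s_1: "cs \<rho> \<beta> \<tau> \<alpha> 1 \<noteq> 0"
    and alpha_0: "complex_of_real (\<alpha> 0) = \<tau> 0 * inverse (\<rho> 0)"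
    and alpha_2: "complex_of_real (\<alpha> 2) = - (\<rho> 1 - inverse (complex_of_real (\<alpha> 1)) * \<tau> 1) + \<rho> 1 * \<beta> 1"
  shows "RQ \<rho> \<beta> \<tau> \<alpha> 2 x =
        cs \<rho> \<beta> \<tau> \<alpha> 1 / cq \<rho> \<beta> \<alpha> 1 * (x + ct \<rho> \<beta> \<alpha> 1 / cs \<rho> \<beta> \<tau> \<alpha> 1) * RQ \<rho> \<beta> \<tau> \<alpha> 1 x
        - \<tau> 0 * cq \<rho> \<beta> \<alpha> 2 / cq \<rho> \<beta> \<alpha> 1 * x * (x - 1) * RQ \<rho> \<beta> \<tau> \<alpha> 0 x"
proof -
  define a0 a1 where "a0 = complex_of_real (\<alpha> 0)" and "a1 = complex_of_real (\<alpha> 1)"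
  define d where "d = complex_of_real (\<alpha> 2) - \<rho> 1 * \<beta> 1"
  have "a1 \<noteq> 0" using \<open>\<alpha> 1 \<noteq> 0\<close> by (simp add: a1_def)
  have tau0: "\<tau> 0 = a0 * \<rho> 0"
    using \<open>\<rho> 0 \<noteq> 0\<close> alpha_0 by (simp add: a0_def field_simps)
  have tau1: "\<tau> 1 = a1 * (d + \<rho> 1)"
    using tau_eq_of_alpha_rec[OF \<open>a1 \<noteq> 0\<close> alpha_2[folded a1_def]] by (simp add: d_def)
  have q1: "cq \<rho> \<beta> \<alpha> 1 = a0 * (a1 - \<rho> 0 * \<beta> 0)"
    by (simp add: cq_def a0_def a1_def)
  have q2: "cq \<rho> \<beta> \<alpha> 2 = a1 * d"
    by (simp add: cq_def a1_def d_def)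
  have s1: "cs \<rho> \<beta> \<tau> \<alpha> 1 = a0 * (\<tau> 1 - \<rho> 0 * \<beta> 0 * \<rho> 1)"
    by (simp add: cs_def cp_def tau0 flip: a0_def)
  have t1: "ct \<rho> \<beta> \<alpha> 1 = - a0 * \<rho> 0 * \<beta> 0 * d"
    using \<open>a1 \<noteq> 0\<close> unfolding ct_def one_add_one q2 by (simp add: a0_def a1_def)
  have Q1: "RQ \<rho> \<beta> \<tau> \<alpha> 1 x = \<rho> 0 * (x - \<beta> 0) + a1"
    by (simp add: RQ_def a1_def)
  have Q2: "RQ \<rho> \<beta> \<tau> \<alpha> 2 x = \<rho> 1 * (x - \<beta> 1) * (\<rho> 0 * (x - \<beta> 0)) + \<tau> 1 * x
      + (d + \<rho> 1 * \<beta> 1) * (\<rho> 0 * (x - \<beta> 0))"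
    by (simp add: RQ_def d_def numeral_2_eq_2)
  have "cq \<rho> \<beta> \<alpha> 1 * RQ \<rho> \<beta> \<tau> \<alpha> 2 x
      = (cs \<rho> \<beta> \<tau> \<alpha> 1 * x + ct \<rho> \<beta> \<alpha> 1) * RQ \<rho> \<beta> \<tau> \<alpha> 1 x
        - \<tau> 0 * cq \<rho> \<beta> \<alpha> 2 * x * (x - 1)"
    unfolding q1 q2 s1 t1 Q1 Q2 tau0 tau1 by algebra
  moreover have "RQ \<rho> \<beta> \<tau> \<alpha> 0 x = 1"
    by (simp add: RQ_def)
  ultimately show ?thesis
    using q_1 s_1 by (simp add: field_simps) algebra
qed

theorem mainTheorem2:
  fixes \<rho> \<beta> \<tau> :: "nat \<Rightarrow> complex" and \<alpha> :: "nat \<Rightarrow> real"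
  assumes rho_nz: "\<And>n. \<rho> n \<noteq> 0"
    and tau_nz: "\<And>n. \<tau> n \<noteq> 0"
    and beta0: "\<beta> 0 \<noteq> 0" "\<beta> 0 \<noteq> 1" "\<beta> 0 \<noteq> -1"
    and beta_nz: "\<And>n. n \<ge> 1 \<Longrightarrow> \<beta> n \<noteq> 0"
    and alpha_nz: "\<And>n. \<alpha> n \<noteq> 0"
    and p_nz: "\<And>n. n \<ge> 1 \<Longrightarrow> cp \<rho> \<tau> \<alpha> (n + 1) \<noteq> 0"
    and q_nz: "\<And>n. n \<ge> 1 \<Longrightarrow> cq \<rho> \<beta> \<alpha> n \<noteq> 0"
    and alpha_rec: "\<And>n. n \<ge> 2 \<Longrightarrow> complex_of_real (\<alpha> n) =
         - (\<rho> (n - 1) - inverse (complex_of_real (\<alpha> (n - 1))) * \<tau> (n - 1)) + \<rho> (n - 1) * \<beta> (n - 1)"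
    and alpha1: "complex_of_real (\<alpha> 1) \<noteq> \<rho> 0 * \<beta> 0"
    and alpha0: "complex_of_real (\<alpha> 0) = \<tau> 0 * inverse (\<rho> 0)"
    and s1_nz: "cs \<rho> \<beta> \<tau> \<alpha> 1 \<noteq> 0"
  shows "\<forall>x::complex.
      RQ \<rho> \<beta> \<tau> \<alpha> 2 x =
        cs \<rho> \<beta> \<tau> \<alpha> 1 / cq \<rho> \<beta> \<alpha> 1 * (x + ct \<rho> \<beta> \<alpha> 1 / cs \<rho> \<beta> \<tau> \<alpha> 1) * RQ \<rho> \<beta> \<tau> \<alpha> 1 x
        - \<tau> 0 * cq \<rho> \<beta> \<alpha> 2 / cq \<rho> \<beta> \<alpha> 1 * x * (x - 1) * RQ \<rho> \<beta> \<tau> \<alpha> 0 x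
    \<and> (\<forall>n\<ge>2. RQ \<rho> \<beta> \<tau> \<alpha> (n + 1) x =
        \<rho> n * (x - ct \<rho> \<beta> \<alpha> n / cr \<rho> \<tau> \<alpha> n) * RQ \<rho> \<beta> \<tau> \<alpha> n x
        + \<tau> (n - 1) * cq \<rho> \<beta> \<alpha> (n + 1) / cq \<rho> \<beta> \<alpha> n * x * RQ \<rho> \<beta> \<tau> \<alpha> (n - 1) x)
    \<and> RQ \<rho> \<beta> \<tau> \<alpha> 1 x = \<rho> 0 * (x + complex_of_real (\<alpha> 1) * inverse (\<rho> 0) - \<beta> 0)
    \<and> RQ \<rho> \<beta> \<tau> \<alpha> 0 x = 1"
proof (intro allI conjI impI)
  fix x :: complex
  show "RQ \<rho> \<beta> \<tau> \<alpha> 0 x = 1"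
    by (simp add: RQ_def)
  show "RQ \<rho> \<beta> \<tau> \<alpha> 1 x = \<rho> 0 * (x + complex_of_real (\<alpha> 1) * inverse (\<rho> 0) - \<beta> 0)"
    using rho_nz[of 0] by (simp add: RQ_def field_simps)
  show "RQ \<rho> \<beta> \<tau> \<alpha> 2 x =
        cs \<rho> \<beta> \<tau> \<alpha> 1 / cq \<rho> \<beta> \<alpha> 1 * (x + ct \<rho> \<beta> \<alpha> 1 / cs \<rho> \<beta> \<tau> \<alpha> 1) * RQ \<rho> \<beta> \<tau> \<alpha> 1 x
        - \<tau> 0 * cq \<rho> \<beta> \<alpha> 2 / cq \<rho> \<beta> \<alpha> 1 * x * (x - 1) * RQ \<rho> \<beta> \<tau> \<alpha> 0 x"
    using alpha_rec[of 2]
    by (intro RQ_two_mixed_recurrence rho_nz alpha_nz q_nz s1_nz alpha0) simp_all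
  fix n :: nat
  assume "n \<ge> 2"
  then show "RQ \<rho> \<beta> \<tau> \<alpha> (n + 1) x =
        \<rho> n * (x - ct \<rho> \<beta> \<alpha> n / cr \<rho> \<tau> \<alpha> n) * RQ \<rho> \<beta> \<tau> \<alpha> n x
        + \<tau> (n - 1) * cq \<rho> \<beta> \<alpha> (n + 1) / cq \<rho> \<beta> \<alpha> n * x * RQ \<rho> \<beta> \<tau> \<alpha> (n - 1) x"
    using alpha_rec by (intro RQ_Suc_mixed_recurrence rho_nz alpha_nz q_nz) auto
qed

end
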